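(* In the setting below, if $C$ is Euclidean LCD, then $l(x)=(x^m-1)/\mathrm{lcm}(g_{11}(x),g_{22}(x))$ is self-reciprocal.
   Context: Let $q$ be a prime power, $F=\mathbb{F}_q$, $m\ge1$ with $\gcd(q,m)=1$, and $R=F[x]/\langle x^m-1\rangle$; elements of $R$ are represented by polynomials of degree $<m$ and identified with their coefficient vectors in $F^m$. A quasi-cyclic code of length $2m$ and index $2$ is an $R$-submodule $C\subseteq R^2$. The Euclidean inner product of $(a_1,a_2),(b_1,b_2)\in R^2$ is the sum of the standard dot products of the coefficient vectors of $a_1,b_1$ and of $a_2,b_2$; $C$ is Euclidean LCD if $C\cap C^{\perp_e}=\{0\}$. For a nonzero polynomial $f$ of degree $k$, $f^*(x)=x^kf(x^{-1})$; $f$ is self-reciprocal if $f^*=\alpha f$ for some $\alpha\in F$. Suppose $C$ is generated as an $R$-module by $(g_{11}(x),g_{12}(x))$ and $(0,g_{22}(x))$, where $g_{11},g_{12},g_{22}\in F[x]$ satisfy: $g_{11}\mid x^m-1$, $g_{22}\mid x^m-1$, $\deg g_{12}<\deg g_{22}$, and $g_{11}g_{22}\mid (x^m-1)g_{12}$. *)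

theory Defs
  imports "HOL-Computational_Algebra.Computational_Algebra"
begin

definition xm1 :: "nat \<Rightarrow> 'a::comm_ring_1 poly" where
  "xm1 m = monom 1 m - 1"

text \<open>Elements of R = F[x]/(x^m-1), represented by polynomials of degree < m
  (equivalently, polynomials fixed by reduction modulo x^m-1).\<close>
definition ring_R :: "nat \<Rightarrow> 'a::field poly set" where
  "ring_R m = {p. p mod xm1 m = p}"

definition qc_code :: "nat \<Rightarrow> 'a::field poly \<Rightarrow> 'a poly \<Rightarrow> 'a poly \<Rightarrow> ('a poly \<times> 'a poly) set" where
  "qc_code m g11 g12 g22 =
     {((a * g11) mod xm1 m, (a * g12 + b * g22) mod xm1 m) | a b. True}"

definition eucl_ip :: "nat \<Rightarrow> ('a::field poly \<times> 'a poly) \<Rightarrow> ('a poly \<times> 'a poly) \<Rightarrow> 'a" where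
  "eucl_ip m u v = (\<Sum>i<m. coeff (fst u) i * coeff (fst v) i) + (\<Sum>i<m. coeff (snd u) i * coeff (snd v) i)"

definition eucl_dual :: "nat \<Rightarrow> ('a::field poly \<times> 'a poly) set \<Rightarrow> ('a poly \<times> 'a poly) set" where
  "eucl_dual m C = {v. v \<in> ring_R m \<times> ring_R m \<and> (\<forall>c\<in>C. eucl_ip m c v = 0)}"

definition euclidean_LCD :: "nat \<Rightarrow> ('a::field poly \<times> 'a poly) set \<Rightarrow> bool" where
  "euclidean_LCD m C \<longleftrightarrow> C \<inter> eucl_dual m C = {(0, 0)}"

text \<open>f^*(x) = x^{deg f} f(1/x) is the library's reflect_poly.\<close>
definition self_reciprocal :: "'a::field poly \<Rightarrow> bool" where
  "self_reciprocal f \<longleftrightarrow> f \<noteq> 0 \<and> (\<exists>\<alpha>. reflect_poly f = smult \<alpha> f)"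

end

(*
  Write \<bar>f for f(x\<^sup>-\<^sup>1) in R.  The Euclidean product of a and c in R\<^sup>2 is the constant term of
  a1 \<bar>c1 + a2 \<bar>c2, so c lies in C\<^sup>\<bottom> as soon as g11 \<bar>c1 + g12 \<bar>c2 and g22 \<bar>c2 vanish in R.
  Let d be a common divisor of l and of g11\<^sup>* or g22\<^sup>*, and let e = (x\<^sup>m - 1)/d.  Since x\<^sup>m - 1 is
  squarefree (gcd(q, m) = 1), d is coprime to lcm(g11, g22), which makes (e, 0), respectively
  e (\<bar>g12, -\<bar>g11), a codeword satisfying the two vanishing conditions.  LCD forces it to be 0,
  hence d is a unit.  So l is coprime to (g11 g22)\<^sup>*, i.e. l\<^sup>* is coprime to g11 g22; as l\<^sup>* divides
  (x\<^sup>m - 1)\<^sup>* = -(x\<^sup>m - 1), which divides l g11 g22, l\<^sup>* divides l and so l\<^sup>* = \<alpha> l.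
*)

theory Submission
  imports Defs "HOL-Number_Theory.Residues"
begin

hide_const (open) UnivPoly.monom UnivPoly.coeff UnivPoly.deg Module.module.smult

lemma degree_xm1: "m \<ge> 1 \<Longrightarrow> degree (xm1 m :: 'a::comm_ring_1 poly) = m"
  unfolding xm1_def by (subst diff_conv_add_uminus, subst degree_add_eq_left) (auto simp: degree_monom_eq)

lemma xm1_neq_0: "m \<ge> 1 \<Longrightarrow> xm1 m \<noteq> (0 :: 'a::comm_ring_1 poly)"
  using degree_xm1[of m] by (metis degree_0 not_one_le_zero)

lemma reflect_poly_xm1: "m \<ge> 1 \<Longrightarrow> reflect_poly (xm1 m :: 'a::comm_ring_1 poly) = - xm1 m"
  by (rule poly_eqI) (simp add: coeff_reflect_poly degree_xm1, auto simp: xm1_def coeff_1)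

lemma coeff_0_neq_0_if_dvd_xm1:
  assumes "m \<ge> 1" "p dvd xm1 m"
  shows "coeff (p :: 'a::comm_ring_1 poly) 0 \<noteq> 0"
proof
  assume "coeff p 0 = 0"
  moreover obtain q where "xm1 m = p * q" using assms(2) by blast
  ultimately have "coeff (xm1 m :: 'a poly) 0 = 0" by (simp add: coeff_mult)
  then show False using assms(1) by (simp add: xm1_def)
qed

lemma cong_monom_1_xm1: "[monom 1 m = 1] (mod (xm1 m :: 'a::field poly))"
  by (simp add: cong_iff_dvd_diff xm1_def)

lemma cong_monom_xm1:
  fixes c :: "'a::field"
  assumes "a mod m = b mod m"
  shows "[monom c a = monom c b] (mod xm1 m)"
proof -
  have *: "[monom c (b + m * t) = monom c b] (mod xm1 m)" for b t
  proof -
    have "[monom c b * monom 1 m ^ t = monom c b * 1 ^ t] (mod xm1 m)"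
      by (intro cong_mult cong_pow cong_monom_1_xm1 cong_refl)
    then show ?thesis by (simp add: monom_power mult_monom)
  qed
  show ?thesis
  proof (cases "b \<le> a")
    case True
    then obtain t where "a = b + m * t" using assms by (metis le_add_diff_inverse mod_eq_dvd_iff_nat dvdE)
    then show ?thesis using * by simp
  next
    case False
    then obtain t where "b = a + m * t" using assms by (metis nat_le_linear le_add_diff_inverse mod_eq_dvd_iff_nat dvdE)
    then show ?thesis using *[of a t] by (simp add: cong_sym)
  qed
qed

lemma pcompose_monom_left: "pcompose (monom c n) q = smult c (q ^ n)"
  by (induction n) (simp_all add: monom_Suc pcompose_pCons monom_0)

lemma pcompose_monom_1_eq_sum:
  fixes f :: "'a::comm_ring_1 poly"
  assumes "degree f \<le> k"
  shows "pcompose f (monom 1 j) = (\<Sum>i\<le>k. monom (coeff f i) (j * i))"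
proof -
  have "pcompose f (monom 1 j) = pcompose (\<Sum>i\<le>k. monom (coeff f i) i) (monom 1 j)"
    using poly_as_sum_of_monoms'[OF assms] by simp
  then show ?thesis
    by (simp add: pcompose_sum pcompose_monom_left monom_power smult_monom)
qed

lemma cong_pcompose_monom_xm1:
  fixes f :: "'a::field poly"
  assumes "j mod m = 1 mod m"
  shows "[pcompose f (monom 1 j) = f] (mod xm1 m)"
proof -
  have "[(\<Sum>i\<le>degree f. monom (coeff f i) (j * i)) = (\<Sum>i\<le>degree f. monom (coeff f i) i)] (mod xm1 m)"
  proof (rule cong_sum, rule cong_monom_xm1)
    fix i
    show "(j * i) mod m = i mod m"
      using assms by (metis mod_mult_left_eq mult_1)
  qed
  then show ?thesis
    by (simp add: pcompose_monom_1_eq_sum[OF order.refl] poly_as_sum_of_monoms)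
qed

section \<open>Conjugation modulo x^m - 1\<close>

text \<open>Substituting x^(m-1), which is x^(-1) modulo x^m - 1: this is \<bar>f(x) = f(x^(-1)).\<close>

definition poly_conj :: "nat \<Rightarrow> 'a::comm_ring_1 poly \<Rightarrow> 'a poly" where
  "poly_conj m f = pcompose f (monom 1 (m - 1))"

lemma poly_conj_0 [simp]: "poly_conj m 0 = 0"
  by (simp add: poly_conj_def)

lemma poly_conj_mult: "poly_conj m (f * g) = poly_conj m f * poly_conj m g"
  by (simp add: poly_conj_def pcompose_mult)

lemma poly_conj_uminus: "poly_conj m (- f) = - poly_conj m f"
  by (simp add: poly_conj_def pcompose_uminus)

lemma poly_conj_diff: "poly_conj m (f - g) = poly_conj m f - poly_conj m g"
  by (simp add: poly_conj_def pcompose_diff)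

lemma poly_conj_poly_conj:
  fixes f :: "'a::field poly"
  assumes "m \<ge> 1"
  shows "[poly_conj m (poly_conj m f) = f] (mod xm1 m)"
proof -
  have "(m - 1) * (m - 1) + m * 2 = 1 + m * m"
    using assms by (cases m) (simp_all add: algebra_simps)
  then have "((m - 1) * (m - 1)) mod m = 1 mod m"
    by (metis mod_mult_self1 mod_mult_self2)
  then show ?thesis
    by (simp add: poly_conj_def pcompose_assoc[symmetric] pcompose_monom_left monom_power
        cong_pcompose_monom_xm1)
qed

lemma cong_poly_conj:
  fixes f g :: "'a::field poly"
  assumes "[f = g] (mod xm1 m)"
  shows "[poly_conj m f = poly_conj m g] (mod xm1 m)"
proof -
  have "poly_conj m (xm1 m) = monom (1::'a) m ^ (m - 1) - 1"
    by (simp add: poly_conj_def xm1_def pcompose_diff pcompose_monom_left pcompose_1 monom_power mult.commute)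
  moreover have "[monom (1::'a) m ^ (m - 1) = 1 ^ (m - 1)] (mod xm1 m)"
    by (intro cong_pow cong_monom_1_xm1)
  ultimately have "xm1 m dvd poly_conj m (xm1 m :: 'a poly)"
    by (simp add: cong_iff_dvd_diff)
  moreover obtain t where "f - g = xm1 m * t"
    using assms by (auto simp: cong_iff_dvd_diff)
  then have "poly_conj m f - poly_conj m g = poly_conj m (xm1 m) * poly_conj m t"
    by (metis poly_conj_diff poly_conj_mult)
  ultimately show ?thesis by (simp add: cong_iff_dvd_diff)
qed

definition reverse_poly :: "nat \<Rightarrow> 'a::comm_monoid_add poly \<Rightarrow> 'a poly" where
  "reverse_poly k f = (\<Sum>i\<le>k. monom (coeff f i) (k - i))"

lemma coeff_reverse_poly:
  "coeff (reverse_poly k f) n = (if n \<le> k then coeff f (k - n) else 0)"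
proof -
  have "coeff (reverse_poly k f) n = (\<Sum>i\<le>k. if i = k - n \<and> n \<le> k then coeff f i else 0)"
    unfolding reverse_poly_def coeff_sum by (intro sum.cong) auto
  then show ?thesis by (cases "n \<le> k") simp_all
qed

lemma degree_reverse_poly_le: "degree (reverse_poly k f) \<le> k"
  by (rule degree_le) (simp add: coeff_reverse_poly)

lemma reflect_poly_eq_reverse_poly: "reflect_poly f = reverse_poly (degree f) f"
  by (simp add: poly_eq_iff coeff_reverse_poly coeff_reflect_poly)

lemma cong_reverse_poly:
  fixes f :: "'a::field poly"
  assumes "degree f \<le> k" "m \<ge> 1"
  shows "[reverse_poly k f = monom 1 k * poly_conj m f] (mod xm1 m)"
proof -
  have "[monom (coeff f i) (k - i) = monom (coeff f i) (k + (m - 1) * i)] (mod xm1 m)"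
    if "i \<le> k" for i
  proof (rule cong_monom_xm1)
    have "k + (m - 1) * i + i = (k - i) + m * i + i"
      using that assms(2) by (simp add: algebra_simps)
    then show "(k - i) mod m = (k + (m - 1) * i) mod m" by simp
  qed
  then have "[reverse_poly k f = (\<Sum>i\<le>k. monom (coeff f i) (k + (m - 1) * i))] (mod xm1 m)"
    unfolding reverse_poly_def by (intro cong_sum) simp
  then show ?thesis
    by (simp add: poly_conj_def pcompose_monom_1_eq_sum[OF assms(1)] sum_distrib_left mult_monom)
qed

lemma cong_reflect_poly:
  fixes f :: "'a::field poly"
  shows "m \<ge> 1 \<Longrightarrow> [reflect_poly f = monom 1 (degree f) * poly_conj m f] (mod xm1 m)"
  by (simp add: reflect_poly_eq_reverse_poly cong_reverse_poly)

section \<open>The Euclidean inner product\<close>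

lemma sum_coeff_mult_eq_coeff_reverse_poly:
  fixes p v :: "'a::comm_semiring_0 poly"
  assumes "m \<ge> 1"
  shows "(\<Sum>i<m. coeff p i * coeff v i) = coeff (p * reverse_poly (m - 1) v) (m - 1)"
proof -
  have "coeff (p * reverse_poly (m - 1) v) (m - 1) = (\<Sum>i\<le>m - 1. coeff p i * coeff v i)"
    unfolding coeff_mult using assms by (intro sum.cong) (auto simp: coeff_reverse_poly Suc_diff_Suc)
  also have "{..m - 1} = {..<m}" using assms by auto
  finally show ?thesis by simp
qed

lemma coeff_eq_0_if_xm1_dvd:
  fixes P :: "'a::idom poly"
  assumes "m \<ge> 1" "xm1 m dvd P" "degree P < 2 * m - 1"
  shows "coeff P (m - 1) = 0"
proof -
  obtain t where t: "P = xm1 m * t" using assms(2) by blast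
  show ?thesis
  proof (cases "t = 0")
    case False
    then have "degree P = m + degree t"
      using t assms(1) by (simp add: degree_mult_eq xm1_neq_0 degree_xm1)
    then have "coeff t (m - 1) = 0" using assms(3) by (simp add: coeff_eq_0)
    moreover have "coeff (monom 1 m * t) (m - 1) = 0" using assms(1) by (simp add: coeff_monom_mult)
    ultimately show ?thesis by (simp add: t xm1_def algebra_simps)
  qed (simp add: t)
qed

text \<open>The product is the coefficient of x^(m-1) in a polynomial of degree < 2m - 1 congruent to
  x^(m-1) (p1 \<bar>v1 + p2 \<bar>v2).\<close>

lemma eucl_ip_eq_0_if_cong:
  fixes p1 p2 v1 v2 :: "'a::field poly"
  assumes m: "m \<ge> 1"
    and deg: "degree p1 < m" "degree p2 < m" "degree v1 < m" "degree v2 < m"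
    and cong: "[p1 * poly_conj m v1 + p2 * poly_conj m v2 = 0] (mod xm1 m)"
  shows "eucl_ip m (p1, p2) (v1, v2) = 0"
proof -
  define P where "P = p1 * reverse_poly (m - 1) v1 + p2 * reverse_poly (m - 1) v2"
  have "eucl_ip m (p1, p2) (v1, v2) = coeff P (m - 1)"
    by (simp add: eucl_ip_def P_def sum_coeff_mult_eq_coeff_reverse_poly[OF m])
  moreover have "[P = monom 1 (m - 1) * (p1 * poly_conj m v1 + p2 * poly_conj m v2)] (mod xm1 m)"
    unfolding P_def distrib_left using deg m
    by (intro cong_add; subst mult.left_commute; intro cong_mult cong_refl cong_reverse_poly) simp_all
  with cong have "xm1 m dvd P"
    by (metis cong_0_iff cong_scalar_left cong_trans mult_zero_right)
  moreover have "degree P \<le> (m - 1) + (m - 1)"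
    unfolding P_def using deg
    by (intro degree_add_le order.trans[OF degree_mult_le] add_mono degree_reverse_poly_le) simp_all
  ultimately show ?thesis
    using m coeff_eq_0_if_xm1_dvd[of m P] by simp
qed

lemma degree_mod_xm1_less:
  fixes p :: "'a::field poly"
  assumes "m \<ge> 1"
  shows "degree (p mod xm1 m) < m"
  using degree_mod_less[OF xm1_neq_0[OF assms], of p] degree_xm1[OF assms, where 'a='a] assms
  by (cases "p mod xm1 m = 0") auto

lemma xm1_dvd_codeword_if_euclidean_LCD:
  fixes g11 g12 g22 a b :: "'a::field poly"
  defines "c1 \<equiv> a * g11" and "c2 \<equiv> a * g12 + b * g22"
  assumes m: "m \<ge> 1" and lcd: "euclidean_LCD m (qc_code m g11 g12 g22)"
    and orth1: "[g11 * poly_conj m c1 + g12 * poly_conj m c2 = 0] (mod xm1 m)"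
    and orth2: "[g22 * poly_conj m c2 = 0] (mod xm1 m)"
  shows "xm1 m dvd c1 \<and> xm1 m dvd c2"
proof -
  let ?X = "xm1 m :: 'a poly"
  let ?C = "qc_code m g11 g12 g22"
  have in_C: "(c1 mod ?X, c2 mod ?X) \<in> ?C"
    unfolding qc_code_def c1_def c2_def by blast
  have "(c1 mod ?X, c2 mod ?X) \<in> eucl_dual m ?C"
    unfolding eucl_dual_def
  proof (intro CollectI conjI ballI)
    show "(c1 mod ?X, c2 mod ?X) \<in> ring_R m \<times> ring_R m"
      by (simp add: ring_R_def)
  next
    fix c assume "c \<in> ?C"
    then obtain a' b' where c: "c = ((a' * g11) mod ?X, (a' * g12 + b' * g22) mod ?X)"
      unfolding qc_code_def by blast
    have "[(a' * g11) mod ?X * poly_conj m (c1 mod ?X)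
           + (a' * g12 + b' * g22) mod ?X * poly_conj m (c2 mod ?X)
         = (a' * g11) * poly_conj m c1 + (a' * g12 + b' * g22) * poly_conj m c2] (mod ?X)"
      by (intro cong_add cong_mult cong_poly_conj) simp_all
    also have "(a' * g11) * poly_conj m c1 + (a' * g12 + b' * g22) * poly_conj m c2
        = a' * (g11 * poly_conj m c1 + g12 * poly_conj m c2) + b' * (g22 * poly_conj m c2)"
      by (simp add: algebra_simps)
    also have "[\<dots> = a' * 0 + b' * 0] (mod ?X)"
      using orth1 orth2 by (intro cong_add cong_mult cong_refl)
    finally show "eucl_ip m c (c1 mod ?X, c2 mod ?X) = 0"
      unfolding c using m by (intro eucl_ip_eq_0_if_cong degree_mod_xm1_less) simp_all
  qed
  with in_C lcd have "(c1 mod ?X, c2 mod ?X) = (0, 0)"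
    unfolding euclidean_LCD_def by blast
  then show ?thesis by (simp add: mod_eq_0_iff_dvd)
qed

section \<open>Squarefreeness and reciprocals\<close>

lemma of_nat_neq_0_if_coprime_card:
  assumes "coprime (card (UNIV :: 'a::{finite,ring_1} set)) m"
  shows "of_nat m \<noteq> (0::'a)"
proof
  assume "of_nat m = (0::'a)"
  then have "CHAR('a) dvd m" by (simp add: of_nat_eq_0_iff_char_dvd)
  with CHAR_dvd_CARD assms have "is_unit CHAR('a)" by (blast intro: coprime_common_divisor)
  then show False by simp
qed

lemma squarefree_xm1:
  assumes "m \<ge> 1" "of_nat m \<noteq> (0::'a::field)"
  shows "squarefree (xm1 m :: 'a poly)"
proof (rule squarefreeI)
  fix h :: "'a poly" assume "h\<^sup>2 dvd xm1 m"
  then obtain t where t: "xm1 m = h * (h * t)" by (metis dvdE power2_eq_square mult.assoc)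
  have "pderiv (xm1 m :: 'a poly) = monom (of_nat m) (m - 1)"
    by (simp add: xm1_def pderiv_diff pderiv_monom)
  then have "smult (of_nat m) (xm1 m) - monom 1 1 * pderiv (xm1 m) = [:- of_nat m :: 'a:]"
    using assms(1) by (simp add: xm1_def mult_monom smult_monom smult_diff_right)
  moreover have "h dvd xm1 m" "h dvd pderiv (xm1 m)"
    by (simp_all add: t pderiv_mult)
  ultimately have "h dvd [:- of_nat m:]"
    by (metis dvd_diff dvd_smult dvd_mult)
  moreover have "is_unit [:- of_nat m :: 'a:]"
    using assms(2) by (simp add: is_unit_const_poly_iff dvd_field_iff)
  ultimately show "h dvd 1" by (rule dvd_unit_imp_unit)
qed

lemma coprime_if_squarefree_mult:
  fixes a b :: "'a::algebraic_semidom"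
  shows "squarefree (a * b) \<Longrightarrow> coprime a b"
  by (rule coprimeI) (metis squarefreeD power2_eq_square mult_dvd_mono)

lemma coprime_reflect_poly:
  fixes p q :: "'a::field poly"
  assumes "coeff p 0 \<noteq> 0" "coeff q 0 \<noteq> 0" "coprime p q"
  shows "coprime (reflect_poly p) (reflect_poly q)"
proof (rule coprimeI)
  fix h assume hp: "h dvd reflect_poly p" and hq: "h dvd reflect_poly q"
  have "reflect_poly h dvd reflect_poly (reflect_poly p)" "reflect_poly h dvd reflect_poly (reflect_poly q)"
    using hp hq by (metis dvdE dvdI reflect_poly_mult)+
  then have "is_unit (reflect_poly h)"
    using assms by (simp add: coprime_common_divisor)
  then have "degree (reflect_poly h) = 0"
    by (metis is_unit_iff_degree not_is_unit_0)
  moreover have "coeff h 0 \<noteq> 0"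
  proof
    assume "coeff h 0 = 0"
    moreover obtain s where "reflect_poly p = h * s" using hp by blast
    ultimately have "coeff (reflect_poly p) 0 = 0" by (simp add: coeff_mult_0)
    then show False using assms(1) by auto
  qed
  ultimately show "is_unit h"
    by (metis degree_reflect_poly_eq is_unit_iff_degree leading_coeff_0_iff)
qed

lemma self_reciprocal_if_reflect_poly_dvd:
  fixes f :: "'a::field poly"
  assumes "coeff f 0 \<noteq> 0" "reflect_poly f dvd f"
  shows "self_reciprocal f"
proof -
  have "f \<noteq> 0" using assms(1) by auto
  obtain t where t: "f = reflect_poly f * t" using assms(2) by blast
  with \<open>f \<noteq> 0\<close> have "t \<noteq> 0" by auto
  have "degree f = degree f + degree t"
    using degree_mult_eq[of "reflect_poly f" t] t \<open>t \<noteq> 0\<close> \<open>f \<noteq> 0\<close> assms(1) by simp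
  then obtain c where "t = [:c:]" by (metis add_cancel_left_right degree_eq_zeroE)
  with t have "smult (1 / c) f = smult (1 / c) (smult c (reflect_poly f))" by simp
  with \<open>t \<noteq> 0\<close> \<open>t = [:c:]\<close> have "reflect_poly f = smult (1 / c) f"
    by (simp add: smult_smult)
  with \<open>f \<noteq> 0\<close> show ?thesis unfolding self_reciprocal_def by blast
qed

lemma cong_mult_poly_conj_0_if_dvd_reflect_poly:
  fixes d e g :: "'a::field poly"
  assumes m: "m \<ge> 1" and X: "xm1 m = d * e"
    and dg: "d dvd reflect_poly g" and g0: "coeff g 0 \<noteq> 0"
  shows "[g * poly_conj m e = 0] (mod xm1 m)"
proof -
  obtain t where "reflect_poly g = d * t" using dg by blast
  then have g: "g = reflect_poly d * reflect_poly t"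
    using g0 by (metis reflect_poly_mult reflect_poly_reflect_poly)
  have "[poly_conj m (xm1 m) = poly_conj m 0] (mod xm1 m)"
    by (rule cong_poly_conj) (simp add: cong_0_iff)
  then have "[monom 1 (degree d) * reflect_poly t * poly_conj m (xm1 m) = 0] (mod xm1 m)"
    using cong_scalar_left by fastforce
  moreover have "[g * poly_conj m e = (monom 1 (degree d) * poly_conj m d) * reflect_poly t * poly_conj m e] (mod xm1 m)"
    unfolding g using m by (intro cong_mult cong_refl cong_reflect_poly)
  moreover have "(monom 1 (degree d) * poly_conj m d) * reflect_poly t * poly_conj m e
      = monom 1 (degree d) * reflect_poly t * poly_conj m (xm1 m)"
    by (simp only: X poly_conj_mult ac_simps)
  ultimately show ?thesis
    by (metis cong_trans)
qed

lemma dvd_reflect_poly_if_dvd_poly_conj: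
  fixes d g :: "'a::field poly"
  assumes "m \<ge> 1" "d dvd xm1 m" "d dvd poly_conj m g"
  shows "d dvd reflect_poly g"
proof -
  have "[reflect_poly g = monom 1 (degree g) * poly_conj m g] (mod d)"
    by (rule cong_dvd_mono_modulus[OF cong_reflect_poly[OF assms(1)] assms(2)])
  moreover have "d dvd monom 1 (degree g) * poly_conj m g"
    using assms(3) by simp
  ultimately show ?thesis
    using cong_dvd_iff by blast
qed

section \<open>Euclidean LCD quasi-cyclic codes of index 2\<close>

locale euclidean_LCD_qc_code =
  fixes m :: nat and g11 g12 g22 :: "'a::field_gcd poly"
  assumes m_ge_1: "m \<ge> 1"
    and xm1_squarefree: "squarefree (xm1 m :: 'a poly)"
    and g11_dvd_xm1: "g11 dvd xm1 m" and g22_dvd_xm1: "g22 dvd xm1 m"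
    and g11_g22_dvd: "g11 * g22 dvd xm1 m * g12"
    and LCD: "euclidean_LCD m (qc_code m g11 g12 g22)"
begin

abbreviation l :: "'a poly" where
  "l \<equiv> xm1 m div lcm g11 g22"

lemma xm1_eq_l_mult_lcm: "xm1 m = l * lcm g11 g22"
  using g11_dvd_xm1 g22_dvd_xm1 by (simp add: lcm_least)

lemma g11_neq_0: "g11 \<noteq> 0"
  using g11_dvd_xm1 xm1_neq_0[OF m_ge_1] by auto

lemma g22_neq_0: "g22 \<noteq> 0"
  using g22_dvd_xm1 xm1_neq_0[OF m_ge_1] by auto

lemma coprime_if_dvd_l_dvd_lcm:
  assumes "d dvd l" "g dvd lcm g11 g22"
  shows "coprime d g"
proof -
  have "coprime l (lcm g11 g22)"
    using xm1_squarefree by (simp add: coprime_if_squarefree_mult flip: xm1_eq_l_mult_lcm)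
  with assms show ?thesis by (rule coprime_divisors)
qed

text \<open>For d dividing l, the codeword u (g11, g12) - v (0, g22) is ((x^m - 1)/d, 0).\<close>

lemma codeword_of_dvd_l:
  assumes "d dvd l"
  obtains e u v where "xm1 m = d * e" "e = u * g11" "g22 dvd e" "u * g12 = v * g22"
proof -
  obtain l' where l': "l = d * l'" using assms by blast
  obtain L1 where L1: "lcm g11 g22 = g11 * L1" using dvd_lcm1 by blast
  define e where "e = l' * lcm g11 g22"
  define u where "u = l' * L1"
  have X: "xm1 m = d * e"
    using xm1_eq_l_mult_lcm by (simp only: l' e_def mult.assoc)
  have e: "e = u * g11" by (simp add: e_def u_def L1 mult_ac)
  have "g22 dvd e" by (simp add: e_def)
  obtain k where "xm1 m * g12 = g11 * g22 * k" using g11_g22_dvd by blast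
  then have "g11 * (d * (u * g12)) = g11 * (g22 * k)" by (simp add: X e mult_ac)
  then have dk: "d * (u * g12) = g22 * k" using g11_neq_0 by simp
  have "coprime d g22"
    using assms by (simp add: coprime_if_dvd_l_dvd_lcm)
  moreover have "d dvd g22 * k" by (simp flip: dk)
  ultimately have "d dvd k" by (simp add: coprime_dvd_mult_right_iff)
  then obtain v where "k = d * v" by blast
  moreover have "d \<noteq> 0" using X xm1_neq_0[OF m_ge_1] by auto
  ultimately have "u * g12 = v * g22" using dk by (simp add: mult_ac)
  with X e \<open>g22 dvd e\<close> show ?thesis by (rule that)
qed

lemma coprime_l_reflect_poly_g11: "coprime l (reflect_poly g11)"
proof (rule coprimeI)
  fix d assume d: "d dvd l" "d dvd reflect_poly g11"
  obtain e u v where X: "xm1 m = d * e" and e: "e = u * g11" and uv: "u * g12 = v * g22"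
    using codeword_of_dvd_l[OF d(1)] by metis
  have "[g11 * poly_conj m e = 0] (mod xm1 m)"
    using m_ge_1 X d(2) coeff_0_neq_0_if_dvd_xm1[OF m_ge_1 g11_dvd_xm1]
    by (rule cong_mult_poly_conj_0_if_dvd_reflect_poly)
  then have "xm1 m dvd u * g11 \<and> xm1 m dvd u * g12 + (- v) * g22"
    using uv by (intro xm1_dvd_codeword_if_euclidean_LCD[OF m_ge_1 LCD]) (simp_all flip: e)
  then have "d * e dvd 1 * e" by (simp add: X flip: e)
  moreover have "e \<noteq> 0" using X xm1_neq_0[OF m_ge_1] by auto
  ultimately show "is_unit d" by simp
qed

lemma coprime_l_reflect_poly_g22: "coprime l (reflect_poly g22)"
proof (rule coprimeI)
  fix d assume d: "d dvd l" "d dvd reflect_poly g22"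
  obtain e u v where X: "xm1 m = d * e" and e: "e = u * g11" "g22 dvd e" and uv: "u * g12 = v * g22"
    using codeword_of_dvd_l[OF d(1)] by metis
  obtain w where w: "e = g22 * w" using e(2) by blast
  txt \<open>The codeword a (g11, g12) + b (0, g22) = e (\<bar>g12, -\<bar>g11) lies in the dual.\<close>
  define a where "a = poly_conj m g12 * u"
  define b where "b = - (poly_conj m g12 * v + poly_conj m g11 * w)"
  have c1: "a * g11 = poly_conj m g12 * e"
    by (simp add: a_def e(1) mult_ac)
  have c2: "a * g12 + b * g22 = - (poly_conj m g11 * e)"
    using uv by (simp add: a_def b_def w algebra_simps)
  have g22_e: "[g22 * poly_conj m e = 0] (mod xm1 m)"
    using m_ge_1 X d(2) coeff_0_neq_0_if_dvd_xm1[OF m_ge_1 g22_dvd_xm1]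
    by (rule cong_mult_poly_conj_0_if_dvd_reflect_poly)
  have "[g11 * poly_conj m (a * g11) + g12 * poly_conj m (a * g12 + b * g22)
       = (g11 * poly_conj m (poly_conj m g12) - g12 * poly_conj m (poly_conj m g11)) * poly_conj m e] (mod xm1 m)"
    by (simp add: c1 c2 poly_conj_mult poly_conj_uminus algebra_simps)
  also have "[(g11 * poly_conj m (poly_conj m g12) - g12 * poly_conj m (poly_conj m g11)) * poly_conj m e
       = (g11 * g12 - g12 * g11) * poly_conj m e] (mod xm1 m)"
    using m_ge_1 by (intro cong_mult cong_diff cong_refl poly_conj_poly_conj)
  finally have orth1: "[g11 * poly_conj m (a * g11) + g12 * poly_conj m (a * g12 + b * g22) = 0] (mod xm1 m)"
    by simp
  have "g22 * poly_conj m (a * g12 + b * g22) = - poly_conj m (poly_conj m g11) * (g22 * poly_conj m e)"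
    by (simp add: c2 poly_conj_mult poly_conj_uminus algebra_simps)
  then have orth2: "[g22 * poly_conj m (a * g12 + b * g22) = 0] (mod xm1 m)"
    using g22_e by (metis cong_scalar_left mult_zero_right)
  have "xm1 m dvd a * g12 + b * g22"
    using xm1_dvd_codeword_if_euclidean_LCD[OF m_ge_1 LCD orth1 orth2] by blast
  then have "d * e dvd poly_conj m g11 * e" by (simp add: c2 X)
  moreover have "e \<noteq> 0" using X xm1_neq_0[OF m_ge_1] by auto
  ultimately have "d dvd poly_conj m g11" by simp
  then have "d dvd reflect_poly g11"
    using m_ge_1 X by (intro dvd_reflect_poly_if_dvd_poly_conj) simp_all
  then show "is_unit d"
    by (rule coprime_common_divisor[OF coprime_l_reflect_poly_g11 d(1)])
qed

lemma self_reciprocal_l: "self_reciprocal l"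
proof (rule self_reciprocal_if_reflect_poly_dvd)
  have l_dvd: "l dvd xm1 m" using xm1_eq_l_mult_lcm by (metis dvd_triv_left)
  show l0: "coeff l 0 \<noteq> 0" by (rule coeff_0_neq_0_if_dvd_xm1[OF m_ge_1 l_dvd])
  have "coprime (reflect_poly l) (reflect_poly (reflect_poly (g11 * g22)))"
    using coprime_l_reflect_poly_g11 coprime_l_reflect_poly_g22
    by (intro coprime_reflect_poly l0) (simp_all add: reflect_poly_mult coeff_mult_0 g11_neq_0 g22_neq_0)
  moreover have "coeff (g11 * g22) 0 \<noteq> 0"
    using coeff_0_neq_0_if_dvd_xm1[OF m_ge_1 g11_dvd_xm1] coeff_0_neq_0_if_dvd_xm1[OF m_ge_1 g22_dvd_xm1]
    by (simp add: coeff_mult_0)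
  ultimately have cop: "coprime (reflect_poly l) (g11 * g22)"
    by simp
  have "reflect_poly l dvd xm1 m"
    using reflect_poly_xm1[OF m_ge_1] xm1_eq_l_mult_lcm
    by (metis dvd_minus_iff dvd_triv_left reflect_poly_mult)
  also have "xm1 m dvd l * (g11 * g22)"
    using xm1_eq_l_mult_lcm by (metis lcm_least dvd_triv_left dvd_triv_right mult_dvd_mono dvd_refl)
  finally show "reflect_poly l dvd l"
    using cop by (simp add: coprime_dvd_mult_left_iff)
qed

end

theorem lemma3p3:
  fixes g11 g12 g22 :: "'a::{finite,field_gcd} poly" and m :: nat
  assumes "m \<ge> 1"
    and "coprime (card (UNIV :: 'a set)) m"
    and "g11 dvd xm1 m"
    and "g22 dvd xm1 m"
    and "g12 = 0 \<or> degree g12 < degree g22"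
    and "g11 * g22 dvd xm1 m * g12"
    and "euclidean_LCD m (qc_code m g11 g12 g22)"
  shows "self_reciprocal (xm1 m div lcm g11 g22)"
proof -
  have "squarefree (xm1 m :: 'a poly)"
    using assms(1,2) by (intro squarefree_xm1 of_nat_neq_0_if_coprime_card)
  with assms(1,3,4,6,7) interpret euclidean_LCD_qc_code m g11 g12 g22
    by unfold_locales
  show ?thesis by (rule self_reciprocal_l)
qed

end
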